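(* Let $k\ge r\ge3$ and $m,m'\ge 0$ be integers, and let $\pi\in\mathbb{C}_{=}(k,r|m)$. Then $\pi\in\mathbb{C}_{<}(k,r|m')$ if and only if $m<m'$.
   Context: A partition $\pi=(\pi_1,\dots,\pi_\ell)$ is a finite non-increasing sequence of positive integers; "$a$ occurs in $\pi$" means $a=\pi_i$ for some $i$. Göllnitz–Gordon marking: $GG(\pi)$ assigns a positive integer (mark) to each part, processing the parts from smallest to largest; $\pi_i$ receives the smallest positive integer different from the marks of all parts $\pi_g$ with $g>i$ and $\pi_i-\pi_g\le 2$, where $\pi_i-\pi_g<2$ is required when $\pi_i$ is odd. An "$r$-marked part $a$" is a part equal to $a$ with mark $r$. $N_i(\pi)$ is the number of parts with mark $i$; $\pi^{(i)}_1\ge\dots\ge\pi^{(i)}_{N_i(\pi)}$ are the parts with mark $i$, with $\pi^{(i)}_0=+\infty$, $\pi^{(i)}_{N_i(\pi)+1}=-\infty$. $\mathbb{C}(k,r)$: partitions with (i) no odd part repeated; (ii) $\pi_i\ge\pi_{i+k-1}+2$ for $1\le i\le\ell-k+1$, strict if $\pi_i$ even; (iii) at most $r-1$ parts $\le 2$. Starting types: for $\pi\in\mathbb{C}(k,r)$ with $N_2=N_2(\pi)\ge1$, let $l$ be the largest integer in $\{0,\dots,N_2\}$ such that no odd part of $\pi$ is $\ge\pi^{(2)}_l$; for $l<i\le N_2$, $\pi^{(2)}_i$ has type $s_{-1}$. For $b=1,\dots,l$ in increasing order, type and auxiliary $\sigma_b$: for $b=1$: Case 1: 1-marked part $\pi^{(2)}_1-1$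 exists and $\pi^{(2)}_1+2$ does not occur: type $s_0$, $\sigma_1=\pi^{(2)}_1-1$; Case 2: 1-marked $\pi^{(2)}_1-2$ exists and $\pi^{(2)}_1+2$ does not occur: type $s_1$, $\sigma_1=\pi^{(2)}_1-2$; Case 3: 1-marked $\pi^{(2)}_1+2$ exists: type $s_2$, $\sigma_1=\pi^{(2)}_1+2$; Case 4: 1-marked $\pi^{(2)}_1$ exists: type $s_3$, $\sigma_1=\pi^{(2)}_1$. For $2\le b\le l$: Case 1: 1-marked $\pi^{(2)}_b-1$ exists and, if a 1-marked $\pi^{(2)}_b+2$ exists, $\sigma_{b-1}=\pi^{(2)}_b+2$: type $s_0$, $\sigma_b=\pi^{(2)}_b-1$; Case 2: same with $\pi^{(2)}_b-2$: type $s_1$, $\sigma_b=\pi^{(2)}_b-2$; Case 3: 1-marked $\pi^{(2)}_b+2$ exists and $\sigma_{b-1}\ne\pi^{(2)}_b+2$: type $s_2$, $\sigma_b=\pi^{(2)}_b+2$; Case 4: 1-marked $\pi^{(2)}_b$ exists: type $s_3$, $\sigma_b=\pi^{(2)}_b$. $\mathbb{C}_{<}(k,r|p,t)$ (for $p,t\ge0$): the set of $\pi\in\mathbb{C}(k,r)$ such that (1) no odd part is $\ge 2t+1$; (2) $\pi^{(2)}_{p+1}<2t+1<\pi^{(2)}_p$ (in particular $p\le N_2(\pi)$); (3) if $\pi^{(2)}_p=2t+2$ then it is of starting type $s_2$ or $s_3$; (4) if $\pi^{(2)}_{p+1}=2t$ then it is of starting type $s_0$ or $s_1$. $\mathbb{C}_{=}(k,r|p,t)$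 (for $p,t\ge0$): the set of $\pi\in\mathbb{C}(k,r)$ such that (1) the largest odd part is $2t+1$; (2) the mark of $2t+1$ in $GG(\pi)$ is at most $2$; (3) $\pi^{(2)}_p\ge 2t+2$ and $\pi^{(2)}_{p+1}\le 2t+2$; (4) if there is a 2-marked part $2t+2$ of starting type $s_0$, then $\pi^{(2)}_{p+1}=2t+2$ and there exists $1\le i\le p+1$ with $\pi^{(2)}_i=\pi^{(2)}_{p+1}+4(p-i+1)$ and $\pi^{(2)}_i$ occurring exactly once in $\pi$; (5) if there is a 2-marked part $2t+2$ of starting type $s_2$, then $\pi^{(2)}_p=2t+2$; (6) if $2t+2$ occurs in $\pi$ and there is no 2-marked part $2t+2$, then $\pi^{(2)}_p=2t+4$, it is of starting type $s_3$, and there exists $1\le i\le p$ with $\pi^{(2)}_i=\pi^{(2)}_p+4(p-i)$ such that $\pi^{(2)}_i+2$ does not occur in $\pi$. For $m\ge0$: $\mathbb{C}_{<}(k,r|m)=\bigcup_{p+t=m}\mathbb{C}_{<}(k,r|p,t)$ and $\mathbb{C}_{=}(k,r|m)=\bigcup_{p+t=m}\mathbb{C}_{=}(k,r|p,t)$, unions over integers $p,t\ge0$. *)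

theory Defs
  imports Main "HOL-Library.Extended_Real"
begin

(* A partition is a list, non-increasing, of positive integers; list index j (0-based)
   corresponds to the paper's index j+1. *)
definition is_partition :: "nat list \<Rightarrow> bool" where
  "is_partition lam \<longleftrightarrow> sorted (rev lam) \<and> (\<forall>x\<in>set lam. 0 < x)"

(* Goellnitz-Gordon marking.  gg_aux processes the parts in ascending order
   (i.e. from the smallest / largest paper index); acc holds already processed
   (part, mark) pairs. *)
fun gg_aux :: "(nat \<times> nat) list \<Rightarrow> nat list \<Rightarrow> (nat \<times> nat) list" where
  "gg_aux acc [] = acc"
| "gg_aux acc (x # xs) =
     gg_aux (acc @ [(x, LEAST r. 0 < r \<and>
                 r \<notin> {m. \<exists>y. (y, m) \<in> set acc \<and> x - y \<le> 2 \<and> (odd x \<longrightarrow> x - y < 2)})]) xs"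

definition gg_marks :: "nat list \<Rightarrow> nat list" where
  "gg_marks lam = map snd (rev (gg_aux [] (rev lam)))"

definition gg_mark :: "nat list \<Rightarrow> nat \<Rightarrow> nat" where
  "gg_mark lam j = gg_marks lam ! j"

definition marked_parts :: "nat list \<Rightarrow> nat \<Rightarrow> nat list" where
  "marked_parts lam i = [lam ! j. j \<leftarrow> [0..<length lam], gg_mark lam j = i]"

definition Nmark :: "nat list \<Rightarrow> nat \<Rightarrow> nat" where
  "Nmark lam i = length (marked_parts lam i)"

definition pm :: "nat list \<Rightarrow> nat \<Rightarrow> nat \<Rightarrow> ereal" where
  "pm lam i j = (if j = 0 then \<infinity>
                 else if j \<le> Nmark lam i then ereal (real (marked_parts lam i ! (j - 1)))
                 else -\<infinity>)"

definition one_marked :: "nat list \<Rightarrow> int \<Rightarrow> bool" where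
  "one_marked lam a \<longleftrightarrow> (\<exists>j<length lam. int (lam ! j) = a \<and> gg_mark lam j = 1)"

definition occurs :: "nat list \<Rightarrow> int \<Rightarrow> bool" where
  "occurs lam a \<longleftrightarrow> (\<exists>x\<in>set lam. int x = a)"

definition C_set :: "nat \<Rightarrow> nat \<Rightarrow> nat list set" where
  "C_set k r = {lam. is_partition lam
     \<and> (\<forall>a. odd a \<longrightarrow> count_list lam a \<le> 1)
     \<and> (\<forall>i. i + k - 1 < length lam \<longrightarrow>
            lam ! i \<ge> lam ! (i + k - 1) + 2 \<and> (even (lam ! i) \<longrightarrow> lam ! i > lam ! (i + k - 1) + 2))
     \<and> length (filter (\<lambda>x. x \<le> 2) lam) \<le> r - 1}"

datatype stype = Sm1 | S0 | S1 | S2 | S3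

definition l_idx :: "nat list \<Rightarrow> nat" where
  "l_idx lam = (GREATEST l. l \<le> Nmark lam 2 \<and> (\<forall>x\<in>set lam. odd x \<longrightarrow> ereal (real x) < pm lam 2 l))"

(* type and sigma_b of pi^(2)_b for 1 <= b <= l; cases checked in the paper's order *)
fun st_aux :: "nat list \<Rightarrow> nat \<Rightarrow> (stype \<times> int) option" where
  "st_aux lam 0 = None"
| "st_aux lam (Suc b) =
    (let x = int (marked_parts lam 2 ! b) in
     if b = 0 then
       (if one_marked lam (x - 1) \<and> \<not> occurs lam (x + 2) then Some (S0, x - 1)
        else if one_marked lam (x - 2) \<and> \<not> occurs lam (x + 2) then Some (S1, x - 2)
        else if one_marked lam (x + 2) then Some (S2, x + 2)
        else if one_marked lam x then Some (S3, x)
        else None)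
     else
       (case st_aux lam b of
          None \<Rightarrow> None
        | Some (_, s) \<Rightarrow>
           (if one_marked lam (x - 1) \<and> (one_marked lam (x + 2) \<longrightarrow> s = x + 2) then Some (S0, x - 1)
            else if one_marked lam (x - 2) \<and> (one_marked lam (x + 2) \<longrightarrow> s = x + 2) then Some (S1, x - 2)
            else if one_marked lam (x + 2) \<and> s \<noteq> x + 2 then Some (S2, x + 2)
            else if one_marked lam x then Some (S3, x)
            else None)))"

definition start_type :: "nat list \<Rightarrow> nat \<Rightarrow> stype option" where
  "start_type lam b =
     (if 1 \<le> b \<and> b \<le> l_idx lam then map_option fst (st_aux lam b)
      else if l_idx lam < b \<and> b \<le> Nmark lam 2 then Some Sm1
      else None)"

definition C_lt :: "nat \<Rightarrow> nat \<Rightarrow> nat \<Rightarrow> nat \<Rightarrow> nat list set" where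
  "C_lt k r p t = {lam. lam \<in> C_set k r
     \<and> (\<forall>x\<in>set lam. odd x \<longrightarrow> x < 2*t+1)
     \<and> pm lam 2 (p+1) < ereal (real (2*t+1)) \<and> ereal (real (2*t+1)) < pm lam 2 p
     \<and> (pm lam 2 p = ereal (real (2*t+2)) \<longrightarrow> start_type lam p \<in> {Some S2, Some S3})
     \<and> (pm lam 2 (p+1) = ereal (real (2*t)) \<longrightarrow> start_type lam (p+1) \<in> {Some S0, Some S1})}"

definition C_eq :: "nat \<Rightarrow> nat \<Rightarrow> nat \<Rightarrow> nat \<Rightarrow> nat list set" where
  "C_eq k r p t = {lam. lam \<in> C_set k r
     \<and> (2*t+1) \<in> set lam \<and> (\<forall>x\<in>set lam. odd x \<longrightarrow> x \<le> 2*t+1)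
     \<and> (\<forall>j<length lam. lam ! j = 2*t+1 \<longrightarrow> gg_mark lam j \<le> 2)
     \<and> pm lam 2 p \<ge> ereal (real (2*t+2)) \<and> pm lam 2 (p+1) \<le> ereal (real (2*t+2))
     \<and> ((\<exists>b. 1 \<le> b \<and> b \<le> Nmark lam 2 \<and> pm lam 2 b = ereal (real (2*t+2)) \<and> start_type lam b = Some S0) \<longrightarrow>
          pm lam 2 (p+1) = ereal (real (2*t+2)) \<and>
          (\<exists>i v. 1 \<le> i \<and> i \<le> p+1 \<and> pm lam 2 i = ereal (real v) \<and>
                 pm lam 2 i = pm lam 2 (p+1) + ereal (4 * (real p - real i + 1)) \<and>
                 count_list lam v = 1))
     \<and> ((\<exists>b. 1 \<le> b \<and> b \<le> Nmark lam 2 \<and> pm lam 2 b = ereal (real (2*t+2)) \<and> start_type lam b = Some S2) \<longrightarrow>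
          pm lam 2 p = ereal (real (2*t+2)))
     \<and> ((2*t+2) \<in> set lam \<and> \<not> (\<exists>b. 1 \<le> b \<and> b \<le> Nmark lam 2 \<and> pm lam 2 b = ereal (real (2*t+2))) \<longrightarrow>
          pm lam 2 p = ereal (real (2*t+4)) \<and> start_type lam p = Some S3 \<and>
          (\<exists>i v. 1 \<le> i \<and> i \<le> p \<and> pm lam 2 i = ereal (real v) \<and>
                 pm lam 2 i = pm lam 2 p + ereal (4 * (real p - real i)) \<and>
                 (v + 2) \<notin> set lam))}"

definition C_lt_m :: "nat \<Rightarrow> nat \<Rightarrow> nat \<Rightarrow> nat list set" where
  "C_lt_m k r m = (\<Union>p\<in>{0..m}. C_lt k r p (m - p))"

definition C_eq_m :: "nat \<Rightarrow> nat \<Rightarrow> nat \<Rightarrow> nat list set" where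
  "C_eq_m k r m = (\<Union>p\<in>{0..m}. C_eq k r p (m - p))"

end

theory Submission
  imports Defs
begin

(* Let A(v) be the number of 2-marked parts exceeding v.  A partition lies in C_<(k,r|p,u)
   only for p = A(2u+1), i.e. only for m = L(u) := u + A(2u+1).  Above the largest odd part
   2t+1 all 2-marked parts are even and pairwise at distance at least 4, so for u >= t the
   function L grows by one per step, except that it stays put when 2u+2 is 2-marked, and it
   never stays put twice in a row.  The clauses of C_=(k,r|p,t) give m = p+t <= L(t) and
   L(t+1) <= m+1; hence every m' > m is a value L(u) with u > t, and the starting-type
   clauses can be met (moving u past a flat step if necessary).  Conversely L(t') <= m forces
   a flat step at t' = t+1 with p = A(2t+1), which the type s_0 clause of C_= and the
   type clause of C_< exclude. *)

section \<open>Goellnitz-Gordon marks\<close>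

definition gg_new_mark :: "(nat \<times> nat) set \<Rightarrow> nat \<Rightarrow> nat" where
  "gg_new_mark S x =
     (LEAST r. 0 < r \<and> r \<notin> {m. \<exists>y. (y, m) \<in> S \<and> x - y \<le> 2 \<and> (odd x \<longrightarrow> x - y < 2)})"

lemma gg_aux_snoc:
  "gg_aux acc (xs @ [x]) = gg_aux acc xs @ [(x, gg_new_mark (set (gg_aux acc xs)) x)]"
  by (induction xs arbitrary: acc) (simp_all add: gg_new_mark_def)

lemma map_fst_gg_aux: "map fst (gg_aux acc xs) = map fst acc @ xs"
  by (induction xs arbitrary: acc) simp_all

lemma length_gg_marks [simp]: "length (gg_marks lam) = length lam"
  using arg_cong[OF map_fst_gg_aux, of length "[]" "rev lam"] by (simp add: gg_marks_def)

lemma gg_marks_Cons: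
  "gg_marks (x # xs) = gg_new_mark (set (zip xs (gg_marks xs))) x # gg_marks xs"
proof -
  have "gg_aux [] (rev xs) = zip (rev xs) (rev (gg_marks xs))"
    using zip_map_fst_snd[of "gg_aux [] (rev xs)"]
    by (simp add: map_fst_gg_aux gg_marks_def rev_map)
  also have "\<dots> = rev (zip xs (gg_marks xs))"
    by (simp add: zip_rev)
  finally have "set (gg_aux [] (rev xs)) = set (zip xs (gg_marks xs))"
    by simp
  moreover have "gg_marks (x # xs) =
      gg_new_mark (set (gg_aux [] (rev xs))) x # map snd (rev (gg_aux [] (rev xs)))"
    by (simp add: gg_marks_def gg_aux_snoc)
  ultimately show ?thesis
    by (simp add: gg_marks_def)
qed

lemma drop_gg_marks: "drop j (gg_marks lam) = gg_marks (drop j lam)"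
proof (induction lam arbitrary: j)
  case Nil
  then show ?case by (simp add: gg_marks_def)
next
  case (Cons x xs)
  then show ?case by (cases j) (simp_all add: gg_marks_Cons)
qed

definition gg_conflict :: "nat list \<Rightarrow> nat \<Rightarrow> nat \<Rightarrow> bool" where
  "gg_conflict lam j g \<longleftrightarrow> j < g \<and> g < length lam \<and>
     lam ! j - lam ! g \<le> 2 \<and> (odd (lam ! j) \<longrightarrow> lam ! j - lam ! g < 2)"

lemma gg_mark_Least:
  assumes "j < length lam"
  shows "gg_mark lam j = (LEAST r. 0 < r \<and> (\<forall>g. gg_conflict lam j g \<longrightarrow> gg_mark lam g \<noteq> r))"
proof -
  have "drop j lam = lam ! j # drop (Suc j) lam"
    using assms by (rule Cons_nth_drop_Suc[symmetric])
  have "gg_mark lam j = hd (gg_marks (drop j lam))"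
    using assms by (simp add: gg_mark_def hd_drop_conv_nth flip: drop_gg_marks)
  also have "\<dots> = hd (gg_marks (lam ! j # drop (Suc j) lam))"
    by (simp only: \<open>drop j lam = lam ! j # drop (Suc j) lam\<close>)
  also have "\<dots> = gg_new_mark (set (zip (drop (Suc j) lam) (drop (Suc j) (gg_marks lam)))) (lam ! j)"
    by (simp add: gg_marks_Cons drop_gg_marks)
  also have "set (zip (drop (Suc j) lam) (drop (Suc j) (gg_marks lam)))
      = {(lam ! g, gg_mark lam g) | g. j < g \<and> g < length lam}"
  proof (intro set_eqI iffI)
    fix z assume "z \<in> set (zip (drop (Suc j) lam) (drop (Suc j) (gg_marks lam)))"
    then obtain i where "i < length lam - Suc j" "z = (lam ! (Suc j + i), gg_mark lam (Suc j + i))"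
      by (auto simp: set_zip gg_mark_def)
    then show "z \<in> {(lam ! g, gg_mark lam g) | g. j < g \<and> g < length lam}"
      by auto
  next
    fix z assume "z \<in> {(lam ! g, gg_mark lam g) | g. j < g \<and> g < length lam}"
    then obtain g where "j < g" "g < length lam" "z = (lam ! g, gg_mark lam g)"
      by blast
    then show "z \<in> set (zip (drop (Suc j) lam) (drop (Suc j) (gg_marks lam)))"
      unfolding set_zip by (auto intro!: exI[of _ "g - Suc j"] simp: gg_mark_def)
  qed
  also have "gg_new_mark {(lam ! g, gg_mark lam g) | g. j < g \<and> g < length lam} (lam ! j)
      = (LEAST r. 0 < r \<and> (\<forall>g. gg_conflict lam j g \<longrightarrow> gg_mark lam g \<noteq> r))"
    unfolding gg_new_mark_def gg_conflict_def by (intro arg_cong[where f = Least] ext) blast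
  finally show ?thesis .
qed

lemma gg_mark_admissible:
  assumes "j < length lam"
  shows "0 < gg_mark lam j \<and> (\<forall>g. gg_conflict lam j g \<longrightarrow> gg_mark lam g \<noteq> gg_mark lam j)"
proof -
  define r where "r = Suc (Max (set (gg_marks lam)))"
  have "gg_mark lam g < r" if "gg_conflict lam j g" for g
    using that unfolding gg_conflict_def gg_mark_def r_def by (intro le_imp_less_Suc Max_ge) simp_all
  then have "0 < r \<and> (\<forall>g. gg_conflict lam j g \<longrightarrow> gg_mark lam g \<noteq> r)"
    unfolding r_def by (metis less_irrefl zero_less_Suc)
  then show ?thesis
    unfolding gg_mark_Least[OF assms] by (rule LeastI)
qed

lemma gg_mark_pos: "j < length lam \<Longrightarrow> 0 < gg_mark lam j"
  using gg_mark_admissible by blast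

lemma gg_mark_conflict:
  assumes "gg_conflict lam j g"
  shows "gg_mark lam g \<noteq> gg_mark lam j"
proof -
  have "j < length lam"
    using assms by (simp add: gg_conflict_def)
  then show ?thesis
    using gg_mark_admissible assms by blast
qed

lemma gg_mark_neq_1:
  assumes "j < length lam" "gg_mark lam j \<noteq> 1"
  obtains g where "gg_conflict lam j g" "gg_mark lam g = 1"
proof -
  have "\<not> (\<forall>g. gg_conflict lam j g \<longrightarrow> gg_mark lam g \<noteq> 1)"
  proof
    assume "\<forall>g. gg_conflict lam j g \<longrightarrow> gg_mark lam g \<noteq> 1"
    then have "gg_mark lam j \<le> 1"
      unfolding gg_mark_Least[OF assms(1)] by (intro Least_le) simp
    then show False
      using gg_mark_pos[OF assms(1)] assms(2) by linarith
  qed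
  with that show ?thesis
    by blast
qed

section \<open>Parts with a given mark\<close>

lemma C_set_is_partition: "lam \<in> C_set k r \<Longrightarrow> is_partition lam"
  by (simp add: C_set_def)

lemma partition_nth_antimono:
  "is_partition lam \<Longrightarrow> i \<le> j \<Longrightarrow> j < length lam \<Longrightarrow> lam ! j \<le> lam ! i"
  unfolding is_partition_def using sorted_rev_nth_mono by blast

lemma mem_marked_parts:
  "x \<in> set (marked_parts lam i) \<longleftrightarrow> (\<exists>j<length lam. lam ! j = x \<and> gg_mark lam j = i)"
  by (auto simp: marked_parts_def)

lemma marked_parts_subset: "set (marked_parts lam i) \<subseteq> set lam"
  by (auto simp: mem_marked_parts)

lemma sorted_marked_parts:
  assumes "is_partition lam"
  shows "sorted_wrt (\<lambda>x y. y < x \<and> (even x \<longrightarrow> y + 2 < x)) (marked_parts lam i)"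
proof -
  let ?P = "\<lambda>j. gg_mark lam j = i"
  have gap: "lam ! g < lam ! j \<and> (even (lam ! j) \<longrightarrow> lam ! g + 2 < lam ! j)"
    if "j < g" "g < length lam" "?P j" "?P g" for j g
  proof -
    have "\<not> gg_conflict lam j g"
      using gg_mark_conflict that(3,4) by metis
    moreover have "lam ! g \<le> lam ! j"
      using partition_nth_antimono[OF assms] that(1,2) by simp
    ultimately show ?thesis
      using that(1,2) unfolding gg_conflict_def by (cases "even (lam ! j)") auto
  qed
  have "sorted_wrt (<) (filter ?P [0..<length lam])"
    by (rule sorted_wrt_filter) simp
  then have "sorted_wrt (\<lambda>j g. lam ! g < lam ! j \<and> (even (lam ! j) \<longrightarrow> lam ! g + 2 < lam ! j))
      (filter ?P [0..<length lam])"
    by (rule sorted_wrt_mono_rel[rotated]) (use gap in auto)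
  moreover have "[lam ! j. j \<leftarrow> js, ?P j] = map ((!) lam) (filter ?P js)" for js
    by (induction js) simp_all
  then have "marked_parts lam i = map ((!) lam) (filter ?P [0..<length lam])"
    unfolding marked_parts_def .
  ultimately show ?thesis
    by (simp add: sorted_wrt_map)
qed

lemma strict_sorted_marked_parts:
  assumes "is_partition lam"
  shows "sorted_wrt (>) (marked_parts lam i)"
  using sorted_marked_parts[OF assms] by (rule sorted_wrt_mono_rel[rotated]) blast

lemma marked_parts_even_gap:
  assumes "is_partition lam" "x \<in> set (marked_parts lam i)" "even x"
  shows "x + 2 \<notin> set (marked_parts lam i)"
proof
  assume "x + 2 \<in> set (marked_parts lam i)"
  then obtain a b where ab: "a < length (marked_parts lam i)" "b < length (marked_parts lam i)"
    "marked_parts lam i ! a = x + 2" "marked_parts lam i ! b = x"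
    using assms(2) by (auto simp: in_set_conv_nth)
  then have "a \<noteq> b"
    by auto
  then consider "a < b" | "b < a"
    by linarith
  then show False
    using sorted_wrt_nth_less[OF sorted_marked_parts[OF assms(1)]] ab assms(3) by cases fastforce+
qed

section \<open>Counting parts above a bound\<close>

definition count_above :: "nat list \<Rightarrow> nat \<Rightarrow> nat" where
  "count_above xs v = length (filter (\<lambda>x. v < x) xs)"

lemma count_above_le_length: "count_above xs v \<le> length xs"
  by (simp add: count_above_def)

lemma count_above_Suc:
  "sorted_wrt (>) xs \<Longrightarrow>
     count_above xs v = count_above xs (Suc v) + (if Suc v \<in> set xs then 1 else 0)"
  by (induction xs) (auto simp: count_above_def)

lemma count_above_Suc_notin:
  "sorted_wrt (>) xs \<Longrightarrow> Suc v \<notin> set xs \<Longrightarrow> count_above xs (Suc v) = count_above xs v"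
  using count_above_Suc[of xs v] by simp

lemma count_above_Suc_mem:
  "sorted_wrt (>) xs \<Longrightarrow> Suc v \<in> set xs \<Longrightarrow> count_above xs v = Suc (count_above xs (Suc v))"
  using count_above_Suc[of xs v] by simp

lemma less_nth_iff_less_count_above:
  "sorted_wrt (>) xs \<Longrightarrow> i < length xs \<Longrightarrow> v < xs ! i \<longleftrightarrow> i < count_above xs v"
proof (induction xs arbitrary: i)
  case Nil
  then show ?case by simp
next
  case (Cons x xs)
  show ?case
  proof (cases "v < x")
    case True
    then show ?thesis
      using Cons by (cases i) (auto simp: count_above_def)
  next
    case False
    then have "\<not> v < y" if "y \<in> set (x # xs)" for y
      using Cons.prems(1) that by auto
    then show ?thesis
      using Cons.prems(2) nth_mem[OF Cons.prems(2)] by (auto simp: count_above_def filter_empty_conv)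
  qed
qed

lemma count_above_nth:
  assumes "sorted_wrt (>) xs" "i < length xs"
  shows "count_above xs (xs ! i) = i"
proof (rule antisym)
  show "count_above xs (xs ! i) \<le> i"
    using less_nth_iff_less_count_above[OF assms] by (meson less_irrefl not_le)
  show "i \<le> count_above xs (xs ! i)"
  proof (rule ccontr)
    assume "\<not> i \<le> count_above xs (xs ! i)"
    then have "count_above xs (xs ! i) < i"
      by simp
    with assms have "xs ! i < xs ! count_above xs (xs ! i)"
      using sorted_wrt_nth_less by fastforce
    then show False
      using less_nth_iff_less_count_above[OF assms(1)] \<open>count_above xs (xs ! i) < i\<close> assms(2)
      by (meson less_irrefl order.strict_trans)
  qed
qed

lemma nth_count_above:
  assumes "sorted_wrt (>) xs" "x \<in> set xs"
  shows "count_above xs x < length xs" "xs ! count_above xs x = x"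
proof -
  obtain i where "i < length xs" "xs ! i = x"
    using assms(2) by (auto simp: in_set_conv_nth)
  then show "count_above xs x < length xs" "xs ! count_above xs x = x"
    using count_above_nth[OF assms(1)] by auto
qed

abbreviation two_marked :: "nat list \<Rightarrow> nat list" where
  "two_marked lam \<equiv> marked_parts lam 2"

lemma pm_0 [simp]: "pm lam i 0 = \<infinity>"
  by (simp add: pm_def)

lemma pm_Suc:
  "pm lam i (Suc j) =
     (if j < length (marked_parts lam i) then ereal (real (marked_parts lam i ! j)) else -\<infinity>)"
  by (simp add: pm_def Nmark_def)

lemma pm_eq_ereal_iff:
  "pm lam i j = ereal (real v) \<longleftrightarrow>
     (\<exists>j'. j = Suc j' \<and> j' < length (marked_parts lam i) \<and> marked_parts lam i ! j' = v)"
  by (cases j) (simp_all add: pm_Suc)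

lemma ereal_less_pm_iff:
  assumes "sorted_wrt (>) (marked_parts lam i)"
  shows "ereal (real v) < pm lam i j \<longleftrightarrow> j \<le> count_above (marked_parts lam i) v"
proof (cases j)
  case (Suc j')
  then show ?thesis
    using less_nth_iff_less_count_above[OF assms, of j' v]
      count_above_le_length[of "marked_parts lam i" v]
    by (auto simp: pm_Suc)
qed simp

lemma pm_less_ereal_Suc_iff:
  assumes "sorted_wrt (>) (marked_parts lam i)"
  shows "pm lam i j < ereal (real (v + 1)) \<longleftrightarrow> count_above (marked_parts lam i) v < j"
proof (cases j)
  case (Suc j')
  then show ?thesis
    using less_nth_iff_less_count_above[OF assms, of j' v]
      count_above_le_length[of "marked_parts lam i" v]
    by (auto simp: pm_Suc)
qed simp

section \<open>Starting types\<close>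

lemma one_marked_occurs: "one_marked lam a \<Longrightarrow> occurs lam a"
  unfolding one_marked_def occurs_def by auto

lemma one_marked_nearby:
  assumes "is_partition lam" "x \<in> set lam"
  shows "one_marked lam (int x) \<or> one_marked lam (int x - 1) \<or> one_marked lam (int x - 2)"
proof -
  obtain j where j: "j < length lam" "lam ! j = x"
    using assms(2) by (auto simp: in_set_conv_nth)
  show ?thesis
  proof (cases "gg_mark lam j = 1")
    case True
    then show ?thesis
      using j unfolding one_marked_def by auto
  next
    case False
    then obtain g where g: "gg_conflict lam j g" "gg_mark lam g = 1"
      using gg_mark_neq_1 j(1) by blast
    then have "g < length lam" "lam ! g \<le> x" "x - lam ! g \<le> 2"
      using partition_nth_antimono[OF assms(1)] j by (auto simp: gg_conflict_def)
    then have "int (lam ! g) \<in> {int x, int x - 1, int x - 2}"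
      by auto
    then show ?thesis
      using g \<open>g < length lam\<close> unfolding one_marked_def by auto
  qed
qed

lemma one_marked_above:
  assumes "is_partition lam" "x + 1 \<notin> set lam" "occurs lam (int x + 2)"
  shows "one_marked lam (int x + 2) \<or> one_marked lam (int x)"
proof -
  obtain y where "y \<in> set lam" "int y = int x + 2"
    using assms(3) unfolding occurs_def by blast
  moreover have "y = x + 2"
    using calculation(2) by linarith
  ultimately have "x + 2 \<in> set lam"
    by simp
  moreover have "\<not> one_marked lam (int x + 1)"
  proof
    assume "one_marked lam (int x + 1)"
    then obtain z where "z \<in> set lam" "int z = int x + 1"
      using one_marked_occurs unfolding occurs_def by blast
    moreover have "z = x + 1"
      using calculation(2) by linarith
    ultimately show False
      using assms(2) by simp
  qed
  ultimately show ?thesis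
    using one_marked_nearby[OF assms(1), of "x + 2"] by (simp add: algebra_simps)
qed

lemma le_l_idx:
  assumes "j < length (two_marked lam)" "\<forall>x\<in>set lam. odd x \<longrightarrow> x < two_marked lam ! j"
  shows "Suc j \<le> l_idx lam"
  unfolding l_idx_def
  by (rule Greatest_le_nat[where b = "Nmark lam 2"]) (use assms in \<open>auto simp: pm_Suc Nmark_def\<close>)

lemma start_type_eq_st_aux:
  assumes "j < length (two_marked lam)" "\<forall>x\<in>set lam. odd x \<longrightarrow> x < two_marked lam ! j"
  shows "start_type lam (Suc j) = map_option fst (st_aux lam (Suc j))"
  using le_l_idx[OF assms] by (simp add: start_type_def)

lemma st_aux_not_Sm1: "st_aux lam b \<noteq> Some (Sm1, s)"
  by (induction b) (auto simp: Let_def split: option.splits)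

lemma st_aux_Suc_not_None:
  assumes "is_partition lam"
  shows "j < length (two_marked lam) \<Longrightarrow> \<forall>x\<in>set lam. odd x \<longrightarrow> x < two_marked lam ! j \<Longrightarrow>
    st_aux lam (Suc j) \<noteq> None"
proof (induction j)
  case 0
  let ?x = "two_marked lam ! 0"
  have "?x \<in> set lam"
    using 0(1) marked_parts_subset nth_mem by blast
  then have "even ?x"
    using 0(2) less_irrefl by blast
  have "?x + 1 \<notin> set lam"
  proof
    assume "?x + 1 \<in> set lam"
    moreover have "odd (?x + 1)"
      using \<open>even ?x\<close> by simp
    ultimately show False
      using 0(2) by fastforce
  qed
  note near = one_marked_nearby[OF assms \<open>?x \<in> set lam\<close>]
  show ?case
  proof (cases "occurs lam (int ?x + 2)")
    case True
    then consider "one_marked lam (int ?x + 2)" | "one_marked lam (int ?x)"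
      using one_marked_above[OF assms \<open>?x + 1 \<notin> set lam\<close>] by blast
    then show ?thesis
      using True by cases (simp_all add: Let_def)
  next
    case False
    then have "\<not> one_marked lam (int ?x + 2)"
      using one_marked_occurs by blast
    with near False show ?thesis
      by (elim disjE) (simp_all add: Let_def)
  qed
next
  case (Suc j)
  let ?x = "two_marked lam ! Suc j"
  have "?x < two_marked lam ! j"
    using sorted_wrt_nth_less[OF strict_sorted_marked_parts[OF assms], of j "Suc j"] Suc.prems(1)
    by simp
  then have "\<forall>x\<in>set lam. odd x \<longrightarrow> x < two_marked lam ! j"
    using Suc.prems(2) by (meson order.strict_trans)
  then have "st_aux lam (Suc j) \<noteq> None"
    using Suc.IH Suc.prems(1) by simp
  then obtain ty s where "st_aux lam (Suc j) = Some (ty, s)"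
    by auto
  moreover have "?x \<in> set lam"
    using Suc.prems(1) marked_parts_subset nth_mem by blast
  note near = one_marked_nearby[OF assms this]
  ultimately show ?case
    using near by (elim disjE) (simp_all add: Let_def)
qed

lemma start_type_of_large_part:
  assumes "is_partition lam" "j < length (two_marked lam)"
    "\<forall>x\<in>set lam. odd x \<longrightarrow> x < two_marked lam ! j"
  shows "start_type lam (Suc j) \<in> {Some S0, Some S1, Some S2, Some S3}"
proof -
  obtain ty s where st: "st_aux lam (Suc j) = Some (ty, s)"
    using st_aux_Suc_not_None[OF assms] by fastforce
  then have "ty \<noteq> Sm1"
    using st_aux_not_Sm1 by blast
  then show ?thesis
    using st start_type_eq_st_aux[OF assms(2,3)] by (cases ty) simp_all
qed

lemma st_aux_S0_or_S2:
  assumes "st_aux lam (Suc j) = Some (ty, s)"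
    "one_marked lam (int (two_marked lam ! j) - 1)" "\<not> one_marked lam (int (two_marked lam ! j))"
  shows "ty = S0 \<or> ty = S2"
  using assms one_marked_occurs[of lam "int (two_marked lam ! j) + 2"]
  by (auto simp: Let_def split: if_splits option.splits)

lemma start_type_S0_or_S2:
  assumes "is_partition lam" "j < length (two_marked lam)"
    "\<forall>x\<in>set lam. odd x \<longrightarrow> x < two_marked lam ! j"
    "one_marked lam (int (two_marked lam ! j) - 1)" "\<not> one_marked lam (int (two_marked lam ! j))"
  shows "start_type lam (Suc j) \<in> {Some S0, Some S2}"
proof -
  obtain ty s where st: "st_aux lam (Suc j) = Some (ty, s)"
    using st_aux_Suc_not_None[OF assms(1-3)] by fastforce
  then show ?thesis
    using st_aux_S0_or_S2[OF st assms(4,5)] start_type_eq_st_aux[OF assms(2,3)] by auto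
qed

section \<open>The sets C_< and C_=\<close>

lemma count_above_two_marked_odd:
  assumes "is_partition lam" "\<forall>x\<in>set lam. odd x \<longrightarrow> x \<le> 2*u+1"
  shows "count_above (two_marked lam) (2*Suc u+1) = count_above (two_marked lam) (2*u+2)"
proof -
  have "Suc (2*u+2) \<notin> set (two_marked lam)"
  proof
    assume "Suc (2*u+2) \<in> set (two_marked lam)"
    then have "Suc (2*u+2) \<in> set lam"
      using marked_parts_subset by blast
    then show False
      using assms(2) by auto
  qed
  then show ?thesis
    using count_above_Suc_notin[OF strict_sorted_marked_parts[OF assms(1)], where v = "2*u+2"] by simp
qed

lemma C_lt_iff:
  assumes "is_partition lam" "\<forall>x\<in>set lam. odd x \<longrightarrow> x < 2*t+1"
  shows "lam \<in> C_lt k r p t \<longleftrightarrow>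
    lam \<in> C_set k r \<and> p = count_above (two_marked lam) (2*t+1) \<and>
    (2*t+2 \<in> set (two_marked lam) \<longrightarrow> start_type lam p \<in> {Some S2, Some S3}) \<and>
    (2*t \<in> set (two_marked lam) \<longrightarrow> start_type lam (Suc p) \<in> {Some S0, Some S1})"
proof -
  let ?xs = "two_marked lam" and ?A = "count_above (two_marked lam)"
  have sorted: "sorted_wrt (>) ?xs"
    using strict_sorted_marked_parts[OF assms(1)] .
  have "Suc (2*t) \<notin> set ?xs"
  proof
    assume "Suc (2*t) \<in> set ?xs"
    then have "Suc (2*t) \<in> set lam"
      using marked_parts_subset by blast
    then show False
      using assms(2) by auto
  qed
  then have A_even: "?A (2*t) = ?A (2*t+1)"
    using count_above_Suc_notin[OF sorted] by simp
  have bracket: "pm lam 2 (p+1) < ereal (real (2*t+1)) \<and> ereal (real (2*t+1)) < pm lam 2 p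
      \<longleftrightarrow> p = ?A (2*t+1)"
    unfolding pm_less_ereal_Suc_iff[OF sorted] ereal_less_pm_iff[OF sorted] A_even by linarith
  have upper: "pm lam 2 p = ereal (real (2*t+2)) \<longleftrightarrow> 2*t+2 \<in> set ?xs" if "p = ?A (2*t+1)"
  proof
    assume "pm lam 2 p = ereal (real (2*t+2))"
    then show "2*t+2 \<in> set ?xs"
      unfolding pm_eq_ereal_iff by (metis nth_mem)
  next
    assume mem: "2*t+2 \<in> set ?xs"
    then have "p = Suc (?A (2*t+2))"
      using that count_above_Suc_mem[OF sorted, of "2*t+1"] by simp
    then show "pm lam 2 p = ereal (real (2*t+2))"
      using nth_count_above[OF sorted mem] by (simp only: pm_Suc if_True)
  qed
  have lower: "pm lam 2 (p+1) = ereal (real (2*t)) \<longleftrightarrow> 2*t \<in> set ?xs" if "p = ?A (2*t+1)"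
  proof
    assume "pm lam 2 (p+1) = ereal (real (2*t))"
    then show "2*t \<in> set ?xs"
      unfolding pm_eq_ereal_iff by (metis nth_mem)
  next
    assume mem: "2*t \<in> set ?xs"
    then have "p = ?A (2*t)"
      using that A_even by simp
    then show "pm lam 2 (p+1) = ereal (real (2*t))"
      using nth_count_above[OF sorted mem] by (simp only: Suc_eq_plus1[symmetric] pm_Suc if_True)
  qed
  have "lam \<in> C_lt k r p t \<longleftrightarrow> lam \<in> C_set k r \<and> p = ?A (2*t+1) \<and>
      (pm lam 2 p = ereal (real (2*t+2)) \<longrightarrow> start_type lam p \<in> {Some S2, Some S3}) \<and>
      (pm lam 2 (p+1) = ereal (real (2*t)) \<longrightarrow> start_type lam (p+1) \<in> {Some S0, Some S1})"
    unfolding C_lt_def mem_Collect_eq using assms(2) bracket by blast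
  also have "\<dots> \<longleftrightarrow> lam \<in> C_set k r \<and> p = ?A (2*t+1) \<and>
      (2*t+2 \<in> set ?xs \<longrightarrow> start_type lam p \<in> {Some S2, Some S3}) \<and>
      (2*t \<in> set ?xs \<longrightarrow> start_type lam (Suc p) \<in> {Some S0, Some S1})"
    using upper lower by auto
  finally show ?thesis .
qed

lemma C_eqD:
  assumes "lam \<in> C_eq k r p t"
  shows "is_partition lam" "2*t+1 \<in> set lam" "\<forall>x\<in>set lam. odd x \<longrightarrow> x \<le> 2*t+1"
    "\<forall>j<length lam. lam ! j = 2*t+1 \<longrightarrow> gg_mark lam j \<le> 2"
  using assms unfolding C_eq_def C_set_def by blast+

lemma C_eq_bounds:
  assumes "lam \<in> C_eq k r p t"
  shows "count_above (two_marked lam) (2*t+2) \<le> p" "p \<le> count_above (two_marked lam) (2*t+1)"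
proof -
  have sorted: "sorted_wrt (>) (two_marked lam)"
    using strict_sorted_marked_parts C_eqD(1)[OF assms] .
  have "pm lam 2 (p+1) \<le> ereal (real (2*t+2))" "ereal (real (2*t+2)) \<le> pm lam 2 p"
    using assms unfolding C_eq_def by blast+
  then have "\<not> ereal (real (2*t+2)) < pm lam 2 (p+1)" "\<not> pm lam 2 p < ereal (real (2*t+1+1))"
    by (simp_all add: not_less)
  then show "count_above (two_marked lam) (2*t+2) \<le> p" "p \<le> count_above (two_marked lam) (2*t+1)"
    unfolding ereal_less_pm_iff[OF sorted] pm_less_ereal_Suc_iff[OF sorted] by simp_all
qed

lemma C_eq_one_marked:
  assumes "lam \<in> C_eq k r p t" "2*t+2 \<in> set (two_marked lam)"
  shows "one_marked lam (int (2*t+1))" "\<not> one_marked lam (int (2*t+2))"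
proof -
  note part = C_eqD(1)[OF assms(1)]
  obtain j where j: "j < length lam" "lam ! j = 2*t+2" "gg_mark lam j = 2"
    using assms(2) by (auto simp: mem_marked_parts)
  obtain g where g: "g < length lam" "lam ! g = 2*t+1"
    using C_eqD(2)[OF assms(1)] by (auto simp: in_set_conv_nth)
  have conflict: "gg_conflict lam a g" if "a < length lam" "lam ! a = 2*t+2" for a
  proof -
    have "a < g"
    proof (rule ccontr)
      assume "\<not> a < g"
      then have "lam ! a \<le> lam ! g"
        using partition_nth_antimono[OF part] that(1) by simp
      then show False
        using that(2) g(2) by simp
    qed
    then show ?thesis
      using that g unfolding gg_conflict_def by simp
  qed
  have "0 < gg_mark lam g" "gg_mark lam g \<le> 2" "gg_mark lam g \<noteq> 2"
    using gg_mark_pos[OF g(1)] C_eqD(4)[OF assms(1)] g gg_mark_conflict[OF conflict[OF j(1,2)]] j(3)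
    by simp_all
  then have mark_g: "gg_mark lam g = 1"
    by linarith
  then show "one_marked lam (int (2*t+1))"
    using g unfolding one_marked_def by auto
  show "\<not> one_marked lam (int (2*t+2))"
  proof
    assume "one_marked lam (int (2*t+2))"
    then obtain a where "a < length lam" "lam ! a = 2*t+2" "gg_mark lam a = 1"
      unfolding one_marked_def by auto
    then show False
      using gg_mark_conflict[OF conflict] mark_g by metis
  qed
qed

lemma C_eq_start_type:
  assumes "lam \<in> C_eq k r p t" "2*t+2 \<in> set (two_marked lam)"
  shows "start_type lam (Suc (count_above (two_marked lam) (2*t+2))) \<in> {Some S0, Some S2}"
proof -
  let ?j = "count_above (two_marked lam) (2*t+2)"
  note part = C_eqD(1)[OF assms(1)]
  have j: "?j < length (two_marked lam)" "two_marked lam ! ?j = 2*t+2"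
    using nth_count_above[OF strict_sorted_marked_parts[OF part] assms(2)] by simp_all
  moreover have "\<forall>x\<in>set lam. odd x \<longrightarrow> x < two_marked lam ! ?j"
    using C_eqD(3)[OF assms(1)] j(2) by fastforce
  moreover have "one_marked lam (int (two_marked lam ! ?j) - 1)"
    using C_eq_one_marked(1)[OF assms] j(2) by (simp add: algebra_simps)
  ultimately show ?thesis
    using start_type_S0_or_S2[OF part] C_eq_one_marked(2)[OF assms] by simp
qed

lemma C_eq_start_type_S0_iff:
  assumes "lam \<in> C_eq k r p t" "2*t+2 \<in> set (two_marked lam)"
  shows "start_type lam (Suc (count_above (two_marked lam) (2*t+2))) = Some S0 \<longleftrightarrow>
    p = count_above (two_marked lam) (2*t+2)"
proof -
  let ?xs = "two_marked lam"
  let ?j = "count_above ?xs (2*t+2)"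
  have sorted: "sorted_wrt (>) ?xs"
    using strict_sorted_marked_parts C_eqD(1)[OF assms(1)] .
  have j: "?j < length ?xs" "?xs ! ?j = 2*t+2"
    using nth_count_above[OF sorted assms(2)] by simp_all
  then have pm_j: "pm lam 2 (Suc ?j) = ereal (real (2*t+2))"
    by (simp only: pm_Suc if_True)
  have index: "i = ?j" if "pm lam 2 (Suc i) = ereal (real (2*t+2))" for i
  proof -
    have "i < length ?xs" "?xs ! i = 2*t+2"
      using that unfolding pm_eq_ereal_iff by auto
    then show ?thesis
      using count_above_nth[OF sorted, of i] by simp
  qed
  have "\<exists>b. 1 \<le> b \<and> b \<le> Nmark lam 2 \<and> pm lam 2 b = ereal (real (2*t+2)) \<and> start_type lam b = Some ty"
    if "start_type lam (Suc ?j) = Some ty" for ty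
    using j(1) pm_j that by (intro exI[of _ "Suc ?j"]) (simp add: Nmark_def)
  then have S0: "start_type lam (Suc ?j) = Some S0 \<Longrightarrow> pm lam 2 (Suc p) = ereal (real (2*t+2))"
    and S2: "start_type lam (Suc ?j) = Some S2 \<Longrightarrow> pm lam 2 p = ereal (real (2*t+2))"
    using assms(1) unfolding C_eq_def mem_Collect_eq Suc_eq_plus1 by blast+
  show ?thesis
  proof
    assume "start_type lam (Suc ?j) = Some S0"
    then show "p = ?j"
      using S0 index by blast
  next
    assume p: "p = ?j"
    have "start_type lam (Suc ?j) \<noteq> Some S2"
    proof
      assume "start_type lam (Suc ?j) = Some S2"
      then have pm_p: "pm lam 2 ?j = ereal (real (2*t+2))"
        using S2 p by simp
      then obtain i where "?j = Suc i"
        unfolding pm_eq_ereal_iff by blast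
      with pm_p have "i = ?j"
        using index by simp
      with \<open>?j = Suc i\<close> show False
        by simp
    qed
    then show "start_type lam (Suc ?j) = Some S0"
      using C_eq_start_type[OF assms] by auto
  qed
qed

text \<open>By \<open>C_lt_iff\<close>, \<open>lt_level lam u\<close> is the only \<open>m\<close> for which \<open>lam\<close> can lie in
  \<open>C_lt k r p u\<close> with \<open>p + u = m\<close>.\<close>

definition lt_level :: "nat list \<Rightarrow> nat \<Rightarrow> nat" where
  "lt_level lam u = u + count_above (two_marked lam) (2*u+1)"

lemma lt_level_Suc:
  assumes "is_partition lam" "\<forall>x\<in>set lam. odd x \<longrightarrow> x \<le> 2*t+1" "t \<le> u"
  shows "lt_level lam (Suc u) + (if 2*u+2 \<in> set (two_marked lam) then 1 else 0) = Suc (lt_level lam u)"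
proof -
  have "\<forall>x\<in>set lam. odd x \<longrightarrow> x \<le> 2*u+1"
    using assms(2,3) by fastforce
  then have "count_above (two_marked lam) (2*Suc u+1) = count_above (two_marked lam) (2*u+2)"
    by (rule count_above_two_marked_odd[OF assms(1)])
  moreover have "count_above (two_marked lam) (2*u+1) =
      count_above (two_marked lam) (2*u+2) + (if 2*u+2 \<in> set (two_marked lam) then 1 else 0)"
    using count_above_Suc[OF strict_sorted_marked_parts[OF assms(1)], where v = "2*u+1"] by simp
  ultimately show ?thesis
    unfolding lt_level_def by simp
qed

lemma lt_level_mono:
  assumes "is_partition lam" "\<forall>x\<in>set lam. odd x \<longrightarrow> x \<le> 2*t+1" "t \<le> u" "u \<le> v"
  shows "lt_level lam u \<le> lt_level lam v"
  using assms(4)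
proof (induction v rule: dec_induct)
  case (step v)
  then show ?case
    using lt_level_Suc[OF assms(1,2), of v] assms(3) by (simp split: if_splits)
qed simp

lemma lt_level_less_Suc_Suc:
  assumes "is_partition lam" "\<forall>x\<in>set lam. odd x \<longrightarrow> x \<le> 2*t+1" "t \<le> u"
  shows "lt_level lam u < lt_level lam (Suc (Suc u))"
proof -
  have "\<not> (2*u+2 \<in> set (two_marked lam) \<and> 2*Suc u+2 \<in> set (two_marked lam))"
    using marked_parts_even_gap[OF assms(1), of "2*u+2" 2] by auto
  then show ?thesis
    using lt_level_Suc[OF assms(1,2), of u] lt_level_Suc[OF assms(1,2), of "Suc u"] assms(3)
    by (simp split: if_splits)
qed

lemma nat_step_hits:
  fixes f :: "nat \<Rightarrow> nat"
  assumes step: "\<And>n. a \<le> n \<Longrightarrow> f (Suc n) \<le> Suc (f n)"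
    and "f a \<le> y" "a \<le> b" "y \<le> f b"
  obtains u where "a \<le> u" "f u = y" "a < u \<Longrightarrow> f (u - 1) < y"
proof -
  define u where "u = (LEAST u. a \<le> u \<and> y \<le> f u)"
  have u: "a \<le> u" "y \<le> f u"
    using LeastI[of "\<lambda>u. a \<le> u \<and> y \<le> f u" b] assms(3,4) unfolding u_def by auto
  have below: "f (u - 1) < y" if "a < u"
  proof (rule ccontr)
    assume "\<not> f (u - 1) < y"
    then have "(LEAST u. a \<le> u \<and> y \<le> f u) \<le> u - 1"
      using that by (intro Least_le) simp
    then show False
      using that unfolding u_def[symmetric] by simp
  qed
  have "f u = y"
  proof (cases "a < u")
    case True
    then have "f (Suc (u - 1)) \<le> Suc (f (u - 1))"
      by (intro step) simp
    then show ?thesis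
      using True below u(2) by simp
  next
    case False
    then show ?thesis
      using u assms(2) by simp
  qed
  with u below that show ?thesis
    by blast
qed

lemma C_eq_lt_level_hits:
  assumes eq: "lam \<in> C_eq k r p t" and "p + t < m"
  obtains u where "t < u" "lt_level lam u = m" "Suc t < u \<Longrightarrow> 2*u \<notin> set (two_marked lam)"
proof -
  note part = C_eqD(1)[OF eq] and odd = C_eqD(3)[OF eq]
  have step: "lt_level lam (Suc n) \<le> Suc (lt_level lam n)" if "Suc t \<le> n" for n
    using lt_level_Suc[OF part odd, of n] that by simp
  have "count_above (two_marked lam) (2*t+1) =
      count_above (two_marked lam) (2*t+2) + (if 2*t+2 \<in> set (two_marked lam) then 1 else 0)"
    using count_above_Suc[OF strict_sorted_marked_parts[OF part], where v = "2*t+1"] by simp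
  then have "lt_level lam (Suc t) \<le> m"
    using lt_level_Suc[OF part odd, of t] C_eq_bounds(1)[OF eq] \<open>p + t < m\<close>
    unfolding lt_level_def by (simp split: if_splits)
  moreover have "m \<le> lt_level lam m"
    by (simp add: lt_level_def)
  ultimately obtain u where u: "Suc t \<le> u" "lt_level lam u = m" "Suc t < u \<Longrightarrow> lt_level lam (u - 1) < m"
    using nat_step_hits[of "Suc t" "lt_level lam" m m] step \<open>p + t < m\<close> by auto
  have "2*u \<notin> set (two_marked lam)" if gt: "Suc t < u"
  proof -
    obtain w where w: "u = Suc w"
      using gt by (cases u) auto
    then have "lt_level lam u + (if 2*w+2 \<in> set (two_marked lam) then 1 else 0) = Suc (lt_level lam w)"
      using lt_level_Suc[OF part odd, of w] gt by simp
    then show ?thesis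
      using u(2,3) gt w by (simp split: if_splits)
  qed
  moreover have "t < u"
    using u(1) by simp
  ultimately show ?thesis
    using that u(2) by blast
qed

lemma C_lt_m_memI: "lam \<in> C_lt k r p t \<Longrightarrow> lam \<in> C_lt_m k r (p + t)"
  unfolding C_lt_m_def by (intro UN_I[of p]) simp_all

lemma C_eq_C_lt_flat_step:
  assumes eq: "lam \<in> C_eq k r p t" and lt: "lam \<in> C_lt k r p' (Suc t)"
    and mem: "2*t+2 \<in> set (two_marked lam)"
  shows "p < count_above (two_marked lam) (2*t+1)"
proof -
  let ?A = "count_above (two_marked lam)"
  note part = C_eqD(1)[OF eq]
  have odd': "\<forall>x\<in>set lam. odd x \<longrightarrow> x < 2*Suc t+1"
    using lt unfolding C_lt_def by blast
  have "p' = ?A (2*Suc t+1)" "start_type lam (Suc p') \<in> {Some S0, Some S1}"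
    using lt mem unfolding C_lt_iff[OF part odd'] by auto
  moreover have "?A (2*Suc t+1) = ?A (2*t+2)"
    using count_above_two_marked_odd[OF part C_eqD(3)[OF eq]] .
  ultimately have "start_type lam (Suc (?A (2*t+2))) = Some S0"
    using C_eq_start_type[OF eq mem] by auto
  then have "p = ?A (2*t+2)"
    using C_eq_start_type_S0_iff[OF eq mem] by simp
  then show ?thesis
    using count_above_Suc_mem[OF strict_sorted_marked_parts[OF part], where v = "2*t+1"] mem by simp
qed

lemma C_eq_C_lt_less:
  assumes eq: "lam \<in> C_eq k r p t" and lt: "lam \<in> C_lt k r p' t'"
  shows "p + t < p' + t'"
proof -
  note part = C_eqD(1)[OF eq] and odd = C_eqD(3)[OF eq]
  have odd': "\<forall>x\<in>set lam. odd x \<longrightarrow> x < 2*t'+1"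
    using lt unfolding C_lt_def by blast
  then have "t < t'"
    using C_eqD(2)[OF eq] by fastforce
  have "p' = count_above (two_marked lam) (2*t'+1)"
    using lt unfolding C_lt_iff[OF part odd'] by simp
  then have level': "p' + t' = lt_level lam t'"
    by (simp add: lt_level_def)
  have level: "p + t \<le> lt_level lam t"
    using C_eq_bounds(2)[OF eq] by (simp add: lt_level_def)
  consider "t' = Suc t" | "Suc (Suc t) \<le> t'"
    using \<open>t < t'\<close> by linarith
  then show ?thesis
  proof cases
    case 1
    show ?thesis
    proof (cases "2*t+2 \<in> set (two_marked lam)")
      case True
      then have "p + t < lt_level lam t"
        using C_eq_C_lt_flat_step[OF eq] lt 1 by (simp add: lt_level_def)
      then show ?thesis
        using lt_level_Suc[OF part odd, of t] True level' 1 by simp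
    next
      case False
      then show ?thesis
        using lt_level_Suc[OF part odd, of t] level level' 1 by simp
    qed
  next
    case 2
    then show ?thesis
      using lt_level_less_Suc_Suc[OF part odd, of t] lt_level_mono[OF part odd, of "Suc (Suc t)" t']
        level level'
      by simp
  qed
qed

lemma C_lt_of_flat_step:
  assumes Cset: "lam \<in> C_set k r" and odd: "\<forall>x\<in>set lam. odd x \<longrightarrow> x < 2*u+1"
    and mem: "2*u+2 \<in> set (two_marked lam)"
    and type: "start_type lam (count_above (two_marked lam) (2*u+1)) \<notin> {Some S2, Some S3}"
  shows "lam \<in> C_lt k r (count_above (two_marked lam) (2*u+2)) (Suc u)"
proof -
  let ?xs = "two_marked lam" and ?A = "count_above (two_marked lam)"
  note part = C_set_is_partition[OF Cset]
  have sorted: "sorted_wrt (>) ?xs"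
    using strict_sorted_marked_parts[OF part] .
  have odd_le: "\<forall>x\<in>set lam. odd x \<longrightarrow> x \<le> 2*u+1" and odd': "\<forall>x\<in>set lam. odd x \<longrightarrow> x < 2*Suc u+1"
    using odd by fastforce+
  have "2*Suc u+2 \<notin> set ?xs"
    using marked_parts_even_gap[OF part mem] by simp
  moreover have "?A (2*u+2) < length ?xs" "?xs ! ?A (2*u+2) = 2*u+2"
    using nth_count_above[OF sorted mem] by simp_all
  then have "start_type lam (Suc (?A (2*u+2))) \<in> {Some S0, Some S1, Some S2, Some S3}"
    using start_type_of_large_part[OF part, of "?A (2*u+2)"] odd by fastforce
  moreover have "?A (2*u+1) = Suc (?A (2*u+2))"
    using count_above_Suc_mem[OF sorted, where v = "2*u+1"] mem by simp
  ultimately show ?thesis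
    unfolding C_lt_iff[OF part odd'] using Cset type count_above_two_marked_odd[OF part odd_le]
    by auto
qed

lemma C_eq_start_type_next_level:
  assumes eq: "lam \<in> C_eq k r p t" and mem: "2*t+2 \<in> set (two_marked lam)"
    and "p + t < lt_level lam (Suc t)"
  shows "start_type lam (Suc (count_above (two_marked lam) (2*Suc t+1))) \<in> {Some S0, Some S1}"
proof -
  have A: "count_above (two_marked lam) (2*Suc t+1) = count_above (two_marked lam) (2*t+2)"
    using count_above_two_marked_odd[OF C_eqD(1,3)[OF eq]] .
  then have "p = count_above (two_marked lam) (2*t+2)"
    using C_eq_bounds(1)[OF eq] assms(3) by (simp add: lt_level_def)
  then show ?thesis
    using C_eq_start_type_S0_iff[OF eq mem] A by simp
qed

lemma C_eq_imp_C_lt_m: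
  assumes eq: "lam \<in> C_eq k r p t" and "p + t < m"
  shows "lam \<in> C_lt_m k r m"
proof -
  let ?xs = "two_marked lam" and ?A = "count_above (two_marked lam)"
  note part = C_eqD(1)[OF eq] and odd = C_eqD(3)[OF eq]
  obtain u where u: "t < u" "lt_level lam u = m" "Suc t < u \<Longrightarrow> 2*u \<notin> set ?xs"
    using C_eq_lt_level_hits[OF eq \<open>p + t < m\<close>] by blast
  have Cset: "lam \<in> C_set k r"
    using eq by (simp add: C_eq_def)
  have odd_u: "\<forall>x\<in>set lam. odd x \<longrightarrow> x < 2*u+1"
    using odd u(1) by fastforce
  show ?thesis
  proof (cases "2*u+2 \<in> set ?xs \<and> start_type lam (?A (2*u+1)) \<notin> {Some S2, Some S3}")
    case True
    then have "lam \<in> C_lt k r (?A (2*u+2)) (Suc u)"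
      using C_lt_of_flat_step[OF Cset odd_u] by blast
    moreover have "?A (2*u+2) + Suc u = m"
      using lt_level_Suc[OF part odd, of u] u(1,2) True
        count_above_two_marked_odd[OF part, of u] odd_u
      by (fastforce simp: lt_level_def)
    ultimately show ?thesis
      using C_lt_m_memI by metis
  next
    case False
    have "lam \<in> C_lt k r (?A (2*u+1)) u"
      unfolding C_lt_iff[OF part odd_u]
    proof (intro conjI impI)
      assume "2*u \<in> set ?xs"
      moreover from this have "u = Suc t"
        using u(1,3) by (cases "Suc t < u") auto
      ultimately show "start_type lam (Suc (?A (2*u+1))) \<in> {Some S0, Some S1}"
        using C_eq_start_type_next_level[OF eq] u(2) \<open>p + t < m\<close> by simp
    qed (use Cset False in auto)
    moreover have "?A (2*u+1) + u = m"
      using u(2) by (simp add: lt_level_def)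
    ultimately show ?thesis
      using C_lt_m_memI by metis
  qed
qed

theorem theorem5p8:
  fixes k r m m' :: nat and lam :: "nat list"
  assumes "3 \<le> r" and "r \<le> k" and "lam \<in> C_eq_m k r m"
  shows "lam \<in> C_lt_m k r m' \<longleftrightarrow> m < m'"
proof -
  obtain p where "p \<le> m" and eq: "lam \<in> C_eq k r p (m - p)"
    using assms(3) by (auto simp: C_eq_m_def)
  show ?thesis
  proof
    assume "lam \<in> C_lt_m k r m'"
    then obtain p' where "p' \<le> m'" "lam \<in> C_lt k r p' (m' - p')"
      by (auto simp: C_lt_m_def)
    then show "m < m'"
      using C_eq_C_lt_less[OF eq] \<open>p \<le> m\<close> by fastforce
  next
    assume "m < m'"
    then show "lam \<in> C_lt_m k r m'"
      using C_eq_imp_C_lt_m[OF eq] \<open>p \<le> m\<close> by simp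
  qed
qed

end
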